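(* Fix $q$ and, for each $D\ge1$, let $f_D:\mathbb{R}^q\to\mathbb{R}^D$ be a stochastic process whose Jacobian at every $x$ satisfies $J(x)\sim\mathcal{N}(\mathbb{E}[J(x)],I_D\otimes\Sigma(x))$ with $\Sigma(x)$ symmetric positive definite, and suppose there is $M\ge0$ independent of $D$ with $\omega_x(v)\le MD$ for all $x$, $v\neq0$, $D$. Then for all $x$ and $v\neq 0$, \[0\le\frac{\|v\|_{R,x}-\|v\|_{F,x}}{\|v\|_{R,x}}\le\frac{1+M}{D},\] so the relative difference between the Finsler norm and the expected Riemannian norm tends to $0$ as $D\to\infty$ at rate $O(1/D)$.
   Context: $\omega_x(v)=(v^{\top}\Sigma(x)v)^{-1}v^{\top}\mathbb{E}[J(x)]^{\top}\mathbb{E}[J(x)]v$; $G(x)=J(x)^{\top}J(x)$; $\|v\|_{F,x}=\mathbb{E}[\sqrt{v^{\top}G(x)v}]$ (Finsler norm), $\|v\|_{R,x}=\sqrt{v^{\top}\mathbb{E}[G(x)]v}$ (norm of the expected Riemannian metric). *)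

theory Defs
  imports "HOL-Probability.Probability"
begin

definition spd :: "real^'q^'q \<Rightarrow> bool" where
  "spd S \<longleftrightarrow> transpose S = S \<and> (\<forall>v. v \<noteq> 0 \<longrightarrow> v \<bullet> (S *v v) > 0)"

definition mvn_density :: "real^'q \<Rightarrow> real^'q^'q \<Rightarrow> real^'q \<Rightarrow> real" where
  "mvn_density mu S y =
     exp (- ((y - mu) \<bullet> (matrix_inv S *v (y - mu))) / 2)
     / sqrt ((2 * pi) ^ CARD('q) * det S)"

text \<open>Density of the matrix normal N(Mu, I_D \<otimes> S) for a D x q matrix (rows indexed by 'd):
  the rows are independent, row i being N(Mu$i, S).\<close>
definition matnormal_density :: "real^'q^'d \<Rightarrow> real^'q^'q \<Rightarrow> real^'q^'d \<Rightarrow> ennreal" where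
  "matnormal_density Mu S Y = ennreal (\<Prod>i\<in>UNIV. mvn_density (Mu $ i) S (Y $ i))"

definition Gmat :: "real^'q^'d \<Rightarrow> real^'q^'q" where
  "Gmat A = transpose A ** A"

definition omega :: "'w measure \<Rightarrow> ('w \<Rightarrow> real^'q^'d) \<Rightarrow> real^'q^'q \<Rightarrow> real^'q \<Rightarrow> real" where
  "omega M J S v = inverse (v \<bullet> (S *v v)) *
     (v \<bullet> ((transpose (integral\<^sup>L M J) ** integral\<^sup>L M J) *v v))"

definition finsler_norm :: "'w measure \<Rightarrow> ('w \<Rightarrow> real^'q^'d) \<Rightarrow> real^'q \<Rightarrow> real" where
  "finsler_norm M J v = integral\<^sup>L M (\<lambda>w. sqrt (v \<bullet> (Gmat (J w) *v v)))"

definition riem_norm :: "'w measure \<Rightarrow> ('w \<Rightarrow> real^'q^'d) \<Rightarrow> real^'q \<Rightarrow> real" where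
  "riem_norm M J v = sqrt (v \<bullet> (integral\<^sup>L M (\<lambda>w. Gmat (J w)) *v v))"

end

theory Submission
  imports Defs "HOL-Real_Asymp.Real_Asymp"
begin

text \<open>The quadratic form \<open>W = v\<^sup>T G v = \<Sum>\<^sub>i (J\<^sub>i \<bullet> v)\<^sup>2\<close> is a sum of
  squares of independent Gaussians \<open>N(m\<^sub>i, s)\<close> with \<open>s = v\<^sup>T \<Sigma> v\<close>, so with \<open>L = \<Sum>\<^sub>i m\<^sub>i\<^sup>2\<close>
  one has \<open>\<parallel>v\<parallel>\<^sub>R\<^sup>2 = E W = Q = D s + L\<close> and \<open>Var W = 4 s L + 2 D s\<^sup>2\<close>. Squeezing \<open>\<surd>w\<close>
  between its tangent at \<open>Q\<close> and a cubic minorant in \<open>\<surd>w\<close> gives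
  \<open>0 \<le> \<surd>Q - E \<surd>W \<le> Var W / (2 Q^(3/2))\<close>, hence a relative gap of at most
  \<open>(2 s L + D s\<^sup>2) / (D s + L)\<^sup>2 \<le> 1/D\<close>.
  The Gaussian moments are obtained from the moment generating function, computed by
  completing the square in the matrix normal density, and read off from the Taylor
  expansion of \<open>t \<mapsto> E[cosh (t X)]\<close> at \<open>0\<close>.\<close>

section \<open>Truncations of the cosh series\<close>

definition cosh_term :: "real \<Rightarrow> nat \<Rightarrow> real" where
  "cosh_term y j = (if even j then y ^ j / fact j else 0)"

lemma cosh_term_nonneg: "cosh_term y j \<ge> 0"
  by (auto simp: cosh_term_def zero_le_even_power)

lemma cosh_term_sums: "cosh_term y sums cosh y"
proof -
  have "cosh_term y = (\<lambda>n. if even n then y ^ n /\<^sub>R fact n else 0)"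
    by (rule ext) (simp add: cosh_term_def divide_simps)
  then show ?thesis using cosh_converges[of y] by simp
qed

lemma cosh_term_partial_sums:
  "(\<Sum>j<2. cosh_term y j) = 1" "(\<Sum>j<4. cosh_term y j) = 1 + y^2 / 2"
proof -
  have "(\<Sum>j<2. cosh_term y j) = cosh_term y 0 + cosh_term y 1"
    and "(\<Sum>j<4. cosh_term y j) = cosh_term y 0 + cosh_term y 1 + cosh_term y 2 + cosh_term y 3"
    by (simp_all add: eval_nat_numeral)
  then show "(\<Sum>j<2. cosh_term y j) = 1" "(\<Sum>j<4. cosh_term y j) = 1 + y^2 / 2"
    by (simp_all add: cosh_term_def fact_numeral)
qed

lemma fact_mult_fact_le_fact_add: "fact j * fact m \<le> (fact (j + m) :: real)"
proof -
  have "fact j * fact m * ((j + m) choose j) = (fact (j + m) :: nat)"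
    using binomial_fact_lemma[of j "j + m"] by simp
  moreover have "(j + m) choose j \<ge> 1"
    using zero_less_binomial_iff[of "j + m" j] by linarith
  ultimately have "fact j * fact m \<le> (fact (j + m) :: nat)"
    by (metis mult.right_neutral mult_le_mono2)
  then have "real (fact j * fact m) \<le> real (fact (j + m))"
    by (simp only: of_nat_le_iff)
  then show ?thesis by simp
qed

text \<open>The remainder of the cosh series after an even number \<open>m\<close> of terms is squeezed
  between its leading term and the leading term times \<open>cosh y\<close>, because the
  coefficients satisfy \<open>1/(j+m)! \<le> 1/(j! m!)\<close>.\<close>
lemma cosh_remainder_bounds:
  fixes y :: real
  assumes m: "even m"
  shows "y ^ m / fact m \<le> cosh y - (\<Sum>j<m. cosh_term y j)"
    and "cosh y - (\<Sum>j<m. cosh_term y j) \<le> y ^ m / fact m * cosh y"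
proof -
  have tail: "(\<lambda>j. cosh_term y (j + m)) sums (cosh y - (\<Sum>j<m. cosh_term y j))"
    by (subst sums_iff_shift) (simp add: cosh_term_sums)
  have "cosh_term y (0 + m) \<le> cosh y - (\<Sum>j<m. cosh_term y j)"
    by (rule sums_le[OF _ sums_single tail]) (simp add: cosh_term_nonneg)
  then have "cosh_term y m \<le> cosh y - (\<Sum>j<m. cosh_term y j)" by simp
  then show "y ^ m / fact m \<le> cosh y - (\<Sum>j<m. cosh_term y j)"
    using m by (simp add: cosh_term_def)
  have "cosh_term y (j + m) \<le> y ^ m / fact m * cosh_term y j" for j
  proof (cases "even j")
    case True
    have "y ^ m \<ge> 0" "y ^ j \<ge> 0" using m True by (auto simp: zero_le_even_power)
    then have "y ^ (j + m) / fact (j + m) \<le> y ^ (j + m) / (fact j * fact m)"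
      using fact_mult_fact_le_fact_add[of j m]
      by (intro divide_left_mono) (auto simp: power_add)
    then show ?thesis using True m by (simp add: cosh_term_def power_add ac_simps)
  qed (use m in \<open>simp add: cosh_term_def\<close>)
  then show "cosh y - (\<Sum>j<m. cosh_term y j) \<le> y ^ m / fact m * cosh y"
    by (rule sums_le[OF _ tail sums_mult[OF cosh_term_sums]])
qed

lemma even_power_le_fact_mult_cosh:
  assumes "even m" shows "y ^ m \<le> fact m * cosh (y :: real)"
proof -
  have "y ^ m / fact m \<le> cosh y"
    using cosh_remainder_bounds(1)[OF assms, of y] sum_nonneg[of "{..<m}" "cosh_term y"]
    by (simp add: cosh_term_nonneg)
  then show ?thesis by (simp add: divide_simps mult.commute)
qed

lemma cosh_le_cosh_scaled:
  assumes "\<bar>t\<bar> \<le> 1" shows "cosh (t * x) \<le> cosh (x :: real)"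
proof -
  have "\<bar>t * x\<bar> \<le> \<bar>x\<bar>" using assms by (simp add: abs_mult mult_left_le_one_le)
  then have "cosh \<bar>t * x\<bar> \<le> cosh \<bar>x\<bar>" by (simp only: cosh_real_nonneg_le_iff abs_ge_zero)
  then show ?thesis by simp
qed

lemma cosh_remainder_scaled_bounds:
  fixes x t :: real
  assumes m: "even m" and t: "0 < t" "t \<le> 1"
  shows "x ^ m \<le> fact m * (cosh (t * x) - (\<Sum>j<m. cosh_term (t * x) j)) / t ^ m"
    and "fact m * (cosh (t * x) - (\<Sum>j<m. cosh_term (t * x) j)) / t ^ m
           \<le> x ^ m + t^2 * (fact m / fact (m + 2) * (x ^ (m + 2) * cosh x))"
proof -
  let ?r = "cosh (t * x) - (\<Sum>j<m. cosh_term (t * x) j)"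
  have "t ^ m * x ^ m / fact m \<le> ?r"
    using cosh_remainder_bounds(1)[OF m, of "t * x"] by (simp add: power_mult_distrib)
  then show "x ^ m \<le> fact m * ?r / t ^ m"
    using t by (simp add: field_simps)
  have "(\<Sum>j<m + 2. cosh_term (t * x) j)
      = (\<Sum>j<m. cosh_term (t * x) j) + cosh_term (t * x) m + cosh_term (t * x) (m + 1)"
    by (simp add: numeral_2_eq_2)
  also have "\<dots> = (\<Sum>j<m. cosh_term (t * x) j) + (t * x) ^ m / fact m"
    using m by (simp add: cosh_term_def)
  finally have "(\<Sum>j<m + 2. cosh_term (t * x) j) = (\<Sum>j<m. cosh_term (t * x) j) + (t * x) ^ m / fact m" .
  then have "?r - (t * x) ^ m / fact m \<le> (t * x) ^ (m + 2) / fact (m + 2) * cosh (t * x)"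
    using cosh_remainder_bounds(2)[of "m + 2" "t * x"] m by simp
  also have "\<dots> \<le> (t * x) ^ (m + 2) / fact (m + 2) * cosh x"
  proof (rule mult_left_mono)
    show "cosh (t * x) \<le> cosh x" using t by (intro cosh_le_cosh_scaled) simp
    show "0 \<le> (t * x) ^ (m + 2) / fact (m + 2)"
      using m by (simp only: zero_le_even_power even_add even_numeral divide_nonneg_pos fact_gt_zero)
  qed
  finally have "fact m * ?r \<le> t ^ m * (x ^ m + t^2 * (fact m / fact (m + 2) * (x ^ (m + 2) * cosh x)))"
    by (simp add: power_mult_distrib power_add power2_eq_square field_simps)
  then show "fact m * ?r / t ^ m \<le> x ^ m + t^2 * (fact m / fact (m + 2) * (x ^ (m + 2) * cosh x))"
    using t by (simp add: divide_le_eq mult.commute)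
qed

section \<open>Moments from the moment generating function\<close>

lemma borel_measurable_cosh[measurable]: "(cosh :: real \<Rightarrow> real) \<in> borel_measurable borel"
  by (intro borel_measurable_continuous_onI continuous_intros)

lemma
  fixes X :: "'w \<Rightarrow> real"
  assumes X[measurable]: "X \<in> borel_measurable M"
    and cosh_int: "\<And>t. integrable M (\<lambda>w. cosh (t * X w))"
    and j: "even j"
  shows integrable_even_power_of_cosh_integrable: "integrable M (\<lambda>w. X w ^ j)"
    and integrable_even_power_mult_cosh: "integrable M (\<lambda>w. X w ^ j * cosh (X w))"
proof -
  show "integrable M (\<lambda>w. X w ^ j)"
  proof (rule Bochner_Integration.integrable_bound)
    show "integrable M (\<lambda>w. fact j * cosh (1 * X w))" using cosh_int[of 1] by simp
    show "AE w in M. norm (X w ^ j) \<le> norm (fact j * cosh (1 * X w))"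
      using even_power_le_fact_mult_cosh[OF j] j by (auto simp: zero_le_even_power)
  qed measurable
  show "integrable M (\<lambda>w. X w ^ j * cosh (X w))"
  proof (rule Bochner_Integration.integrable_bound)
    show "integrable M (\<lambda>w. fact j * cosh (2 * X w))" using cosh_int[of 2] by simp
    have "X w ^ j * cosh (X w) \<le> fact j * cosh (2 * X w)" for w
    proof -
      have "X w ^ j * cosh (X w) \<le> fact j * cosh (X w) ^ 2"
        using even_power_le_fact_mult_cosh[OF j, of "X w"]
        by (simp add: power2_eq_square mult_right_mono)
      also have "\<dots> \<le> fact j * cosh (2 * X w)"
        using mult_mono[OF cosh_real_ge_1 cosh_real_ge_1, of "X w" "X w"]
        by (simp add: cosh_double_cosh power2_eq_square)
      finally show ?thesis .
    qed
    then show "AE w in M. norm (X w ^ j * cosh (X w)) \<le> norm (fact j * cosh (2 * X w))"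
      using j by (auto simp: zero_le_even_power)
  qed measurable
qed

text \<open>Pointwise, the integrand lies between \<open>X^m\<close> and \<open>X^m + O(t\<^sup>2) X^(m+2) cosh X\<close>.\<close>
lemma tendsto_even_moment_cosh:
  fixes X :: "'w \<Rightarrow> real"
  assumes "finite_measure M" and X[measurable]: "X \<in> borel_measurable M"
    and cosh_int: "\<And>t. integrable M (\<lambda>w. cosh (t * X w))"
    and m: "even m"
  shows "((\<lambda>t. fact m * (\<integral>w. cosh (t * X w) - (\<Sum>j<m. cosh_term (t * X w) j) \<partial>M) / t ^ m)
           \<longlongrightarrow> (\<integral>w. X w ^ m \<partial>M)) (at_right 0)"
proof -
  interpret finite_measure M by fact
  define C where "C = (\<integral>w. fact m / fact (m + 2) * (X w ^ (m + 2) * cosh (X w)) \<partial>M)"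
  define g where "g t = (\<lambda>w. fact m * (cosh (t * X w) - (\<Sum>j<m. cosh_term (t * X w) j)) / t ^ m)"
    for t
  have term_int: "integrable M (\<lambda>w. cosh_term (t * X w) j)" for t j
  proof (cases "even j")
    case True
    then have "integrable M (\<lambda>w. t ^ j / fact j * X w ^ j)"
      using integrable_even_power_of_cosh_integrable[OF X cosh_int] by simp
    then show ?thesis using True by (simp add: cosh_term_def power_mult_distrib)
  qed (simp add: cosh_term_def)
  have g_int: "integrable M (g t)" for t
    unfolding g_def using cosh_int term_int by simp
  have g_eq: "(\<integral>w. g t w \<partial>M)
      = fact m * (\<integral>w. cosh (t * X w) - (\<Sum>j<m. cosh_term (t * X w) j) \<partial>M) / t ^ m" for t
    unfolding g_def by simp
  have bounds: "(\<integral>w. X w ^ m \<partial>M) \<le> (\<integral>w. g t w \<partial>M)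
      \<and> (\<integral>w. g t w \<partial>M) \<le> (\<integral>w. X w ^ m \<partial>M) + t^2 * C" if t: "t \<in> {0<..<1}" for t
  proof
    show "(\<integral>w. X w ^ m \<partial>M) \<le> (\<integral>w. g t w \<partial>M)"
      using t cosh_remainder_scaled_bounds(1)[OF m] g_int
        integrable_even_power_of_cosh_integrable[OF X cosh_int m]
      unfolding g_def by (intro integral_mono) auto
    have "(\<integral>w. g t w \<partial>M)
        \<le> (\<integral>w. X w ^ m + t^2 * (fact m / fact (m + 2) * (X w ^ (m + 2) * cosh (X w))) \<partial>M)"
      using t cosh_remainder_scaled_bounds(2)[OF m] g_int
        integrable_even_power_of_cosh_integrable[OF X cosh_int m]
        integrable_even_power_mult_cosh[OF X cosh_int, of "m + 2"] m
      unfolding g_def by (intro integral_mono) auto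
    also have "\<dots> = (\<integral>w. X w ^ m \<partial>M) + t^2 * C"
      unfolding C_def
      using integrable_even_power_of_cosh_integrable[OF X cosh_int m]
        integrable_even_power_mult_cosh[OF X cosh_int, of "m + 2"] m
      by simp
    finally show "(\<integral>w. g t w \<partial>M) \<le> (\<integral>w. X w ^ m \<partial>M) + t^2 * C" .
  qed
  have "((\<lambda>t. \<integral>w. g t w \<partial>M) \<longlongrightarrow> (\<integral>w. X w ^ m \<partial>M)) (at_right 0)"
  proof (rule tendsto_sandwich)
    show "\<forall>\<^sub>F t in at_right 0. (\<integral>w. X w ^ m \<partial>M) \<le> (\<integral>w. g t w \<partial>M)"
      using eventually_at_right_real[OF zero_less_one] by eventually_elim (use bounds in blast)
    show "\<forall>\<^sub>F t in at_right 0. (\<integral>w. g t w \<partial>M) \<le> (\<integral>w. X w ^ m \<partial>M) + t^2 * C"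
      using eventually_at_right_real[OF zero_less_one] by eventually_elim (use bounds in blast)
    have "((\<lambda>t. (\<integral>w. X w ^ m \<partial>M) + t^2 * C) \<longlongrightarrow> (\<integral>w. X w ^ m \<partial>M) + 0^2 * C)
        (at_right (0::real))"
      by (intro tendsto_intros)
    then show "((\<lambda>t. (\<integral>w. X w ^ m \<partial>M) + t^2 * C) \<longlongrightarrow> (\<integral>w. X w ^ m \<partial>M)) (at_right 0)"
      by simp
  qed simp
  then show ?thesis unfolding g_eq .
qed

lemma moments_of_gaussian_mgf:
  fixes X :: "'w \<Rightarrow> real"
  assumes "prob_space M" and X[measurable]: "X \<in> borel_measurable M"
    and mgf_int: "\<And>t. integrable M (\<lambda>w. exp (t * X w))"
    and mgf: "\<And>t. (\<integral>w. exp (t * X w) \<partial>M) = exp (t * a + t^2 * b / 2)"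
  shows "integrable M (\<lambda>w. X w ^ 2)" "integrable M (\<lambda>w. X w ^ 4)"
    and "(\<integral>w. X w ^ 2 \<partial>M) = b + a^2"
    and "(\<integral>w. X w ^ 4 \<partial>M) = a^4 + 6 * a^2 * b + 3 * b^2"
proof -
  interpret prob_space M by fact
  have cosh_exp: "cosh z = (exp z + exp (- z)) / 2" for z :: real
    by (simp add: cosh_field_def)
  have cosh_int: "integrable M (\<lambda>w. cosh (t * X w))" for t
    using mgf_int[of t] mgf_int[of "-t"] by (simp add: cosh_exp)
  have E_cosh: "(\<integral>w. cosh (t * X w) \<partial>M) = cosh (t * a) * exp (t^2 * b / 2)" for t
  proof -
    have "(\<integral>w. cosh (t * X w) \<partial>M) = (exp (t * a + t^2 * b / 2) + exp (- t * a + t^2 * b / 2)) / 2"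
      using mgf_int[of t] mgf_int[of "-t"] mgf[of t] mgf[of "-t"] by (simp add: cosh_exp)
    then show ?thesis by (simp add: cosh_exp exp_add[symmetric] field_simps)
  qed
  show X2_int: "integrable M (\<lambda>w. X w ^ 2)" and "integrable M (\<lambda>w. X w ^ 4)"
    using integrable_even_power_of_cosh_integrable[OF X cosh_int] by simp_all
  note limit = tendsto_even_moment_cosh[OF finite_measure_axioms X cosh_int]
  have "((\<lambda>t. 2 * (cosh (t * a) * exp (t^2 * b / 2) - 1) / t^2) \<longlongrightarrow> (\<integral>w. X w ^ 2 \<partial>M))
      (at_right 0)"
    using limit[of 2] cosh_int by (simp add: cosh_term_partial_sums E_cosh prob_space)
  moreover have "((\<lambda>t. 2 * (cosh (t * a) * exp (t^2 * b / 2) - 1) / t^2) \<longlongrightarrow> b + a^2)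
      (at_right 0)"
    by (real_asymp simp: power2_eq_square)
  ultimately show E2: "(\<integral>w. X w ^ 2 \<partial>M) = b + a^2"
    using tendsto_unique[OF trivial_limit_at_right_real] by blast
  have "((\<lambda>t. 24 * (cosh (t * a) * exp (t^2 * b / 2) - 1 - t^2 * (b + a^2) / 2) / t^4)
      \<longlongrightarrow> (\<integral>w. X w ^ 4 \<partial>M)) (at_right 0)"
    using limit[of 4] cosh_int X2_int
    by (simp add: cosh_term_partial_sums E_cosh E2 prob_space power_mult_distrib fact_numeral diff_diff_eq)
  moreover have "((\<lambda>t. 24 * (cosh (t * a) * exp (t^2 * b / 2) - 1 - t^2 * (b + a^2) / 2) / t^4)
      \<longlongrightarrow> a^4 + 6 * a^2 * b + 3 * b^2) (at_right 0)"
    by (real_asymp simp: algebra_simps power2_eq_square power4_eq_xxxx)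
  ultimately show "(\<integral>w. X w ^ 4 \<partial>M) = a^4 + 6 * a^2 * b + 3 * b^2"
    using tendsto_unique[OF trivial_limit_at_right_real] by blast
qed

section \<open>The matrix normal distribution\<close>

lemma spd_matrix_inv:
  fixes S :: "real^'q^'q" assumes "spd S"
  shows "S ** matrix_inv S = mat 1" "matrix_inv S ** S = mat 1"
proof -
  have "\<forall>x. S *v x = 0 \<longrightarrow> x = 0"
    using assms unfolding spd_def by (metis inner_zero_right less_irrefl)
  then have "invertible S"
    using matrix_left_invertible_ker invertible_left_inverse by blast
  then have "S ** matrix_inv S = mat 1 \<and> matrix_inv S ** S = mat 1"
    unfolding invertible_def matrix_inv_def by (rule someI_ex)
  then show "S ** matrix_inv S = mat 1" "matrix_inv S ** S = mat 1" by auto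
qed

lemma inner_matrix_vector_mult_left: "((A :: real^'n^'m) *v x) \<bullet> y = x \<bullet> (transpose A *v y)"
  by (metis dot_lmul_matrix vector_transpose_matrix)

lemma mvn_density_mult_exp:
  fixes S :: "real^'q^'q" assumes "spd S"
  shows "mvn_density mu S y * exp (y \<bullet> t) =
         exp (mu \<bullet> t + t \<bullet> (S *v t) / 2) * mvn_density (mu + S *v t) S y"
proof -
  define P where "P = matrix_inv S"
  have PS: "P ** S = mat 1" and SP: "S ** P = mat 1" and ST: "transpose S = S"
    using spd_matrix_inv[OF assms] assms unfolding P_def spd_def by auto
  define z where "z = y - mu"
  define u where "u = S *v t"
  have Pu: "P *v u = t" unfolding u_def by (simp add: matrix_vector_mul_assoc PS)
  have uPz: "u \<bullet> (P *v z) = t \<bullet> z"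
    unfolding u_def inner_matrix_vector_mult_left ST by (simp add: matrix_vector_mul_assoc SP)
  have square: "(z - u) \<bullet> (P *v (z - u)) = z \<bullet> (P *v z) - 2 * (z \<bullet> t) + t \<bullet> u"
    by (simp add: matrix_vector_mult_diff_distrib inner_diff_left inner_diff_right Pu uPz
        inner_commute)
  have shift: "y - (mu + S *v t) = z - u" "y \<bullet> t = z \<bullet> t + mu \<bullet> t" "t \<bullet> (S *v t) = t \<bullet> u"
    unfolding z_def u_def by (simp_all add: inner_diff_left)
  have "- ((y - mu) \<bullet> (P *v (y - mu))) / 2 + y \<bullet> t
      = (mu \<bullet> t + t \<bullet> (S *v t) / 2) + - ((y - (mu + S *v t)) \<bullet> (P *v (y - (mu + S *v t)))) / 2"
    unfolding shift square z_def[symmetric] by (simp add: field_simps)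
  then have "exp (- ((y - mu) \<bullet> (P *v (y - mu))) / 2) * exp (y \<bullet> t)
      = exp (mu \<bullet> t + t \<bullet> (S *v t) / 2) * exp (- ((y - (mu + S *v t)) \<bullet> (P *v (y - (mu + S *v t)))) / 2)"
    by (simp only: mult_exp_exp)
  then show ?thesis
    unfolding mvn_density_def P_def[symmetric] by (simp add: field_simps)
qed

lemma matnormal_density_mult_exp:
  fixes S :: "real^'q^'q" and Mu Y T :: "real^'q^'d"
  assumes "spd S"
  shows "matnormal_density Mu S Y * ennreal (exp (Y \<bullet> T)) =
    ennreal (exp (Mu \<bullet> T + (\<Sum>i\<in>UNIV. T$i \<bullet> (S *v T$i)) / 2)) *
    matnormal_density (Mu + (\<chi> i. S *v T$i)) S Y"
proof -
  have "(\<Prod>i\<in>UNIV. mvn_density (Mu $ i) S (Y $ i)) * exp (Y \<bullet> T)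
      = (\<Prod>i\<in>UNIV. mvn_density (Mu $ i) S (Y $ i) * exp (Y $ i \<bullet> T $ i))"
    by (simp add: inner_vec_def[of Y T] exp_sum prod.distrib)
  also have "\<dots> = (\<Prod>i\<in>UNIV. exp (Mu $ i \<bullet> T $ i + T $ i \<bullet> (S *v T $ i) / 2)
      * mvn_density (Mu $ i + S *v T $ i) S (Y $ i))"
    by (simp add: mvn_density_mult_exp[OF assms])
  also have "\<dots> = exp (Mu \<bullet> T + (\<Sum>i\<in>UNIV. T$i \<bullet> (S *v T$i)) / 2) *
      (\<Prod>i\<in>UNIV. mvn_density ((Mu + (\<chi> i. S *v T$i)) $ i) S (Y $ i))"
    by (simp add: prod.distrib exp_sum[symmetric] inner_vec_def[of Mu T] sum.distrib
        sum_divide_distrib)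
  finally show ?thesis
    unfolding matnormal_density_def by (simp add: ennreal_mult''[symmetric] ennreal_mult'[symmetric])
qed

lemma matnormal_density_translate:
  "matnormal_density Mu' S Y = matnormal_density Mu S (Y - (Mu' - Mu))"
  unfolding matnormal_density_def mvn_density_def by (simp add: algebra_simps)

lemma borel_measurable_matnormal_density[measurable]:
  fixes Mu :: "real^'q^'d"
  shows "matnormal_density Mu S \<in> borel_measurable borel"
proof -
  have "continuous_on UNIV (mvn_density m S)" for m
  proof -
    define Q where "Q z = (z - m) \<bullet> (matrix_inv S *v (z - m))" for z
    have "continuous_on UNIV Q"
      unfolding Q_def
      by (intro continuous_intros continuous_on_compose2[OF matrix_vector_mult_linear_continuous_on])
        auto
    then have "continuous_on UNIV (\<lambda>z. exp (- Q z / 2) * inverse (sqrt ((2 * pi) ^ CARD('q) * det S)))"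
      by (intro continuous_intros) auto
    then show ?thesis
      unfolding mvn_density_def Q_def divide_inverse[of "exp _"] .
  qed
  then have "continuous_on UNIV (\<lambda>Y. mvn_density (Mu $ i) S (Y $ i))" for i
    by (rule continuous_on_compose2) (auto intro: continuous_at_imp_continuous_on)
  then have "continuous_on UNIV (\<lambda>Y. \<Prod>i\<in>UNIV. mvn_density (Mu $ i) S (Y $ i))"
    by (rule continuous_on_prod)
  from borel_measurable_continuous_onI[OF this] show ?thesis
    unfolding matnormal_density_def by measurable
qed
lemma nn_integral_matnormal_density_translate:
  fixes Mu Mu' :: "real^'q^'d"
  shows "(\<integral>\<^sup>+Y. matnormal_density Mu' S Y \<partial>lborel) = (\<integral>\<^sup>+Y. matnormal_density Mu S Y \<partial>lborel)"
proof -
  have "(\<integral>\<^sup>+Y. matnormal_density Mu S Y \<partial>lborel)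
      = (\<integral>\<^sup>+Y. matnormal_density Mu S Y \<partial>distr lborel borel ((+) (Mu - Mu')))"
    by (simp add: lborel_distr_plus)
  also have "\<dots> = (\<integral>\<^sup>+Y. matnormal_density Mu S (Mu - Mu' + Y) \<partial>lborel)"
    by (rule nn_integral_distr) auto
  finally show ?thesis
    by (simp add: matnormal_density_translate[of Mu' S _ Mu] algebra_simps)
qed

lemma
  fixes J :: "'w \<Rightarrow> real^'q^'d"
  assumes "prob_space M" and S: "spd S" and D: "distributed M lborel J (matnormal_density Mu S)"
  shows integrable_exp_inner_matnormal: "integrable M (\<lambda>w. exp (J w \<bullet> T))"
    and expectation_exp_inner_matnormal:
      "(\<integral>w. exp (J w \<bullet> T) \<partial>M) = exp (Mu \<bullet> T + (\<Sum>i\<in>UNIV. T$i \<bullet> (S *v T$i)) / 2)"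
proof -
  interpret prob_space M by fact
  have [measurable]: "J \<in> borel_measurable M"
    using distributed_measurable[OF D] by simp
  have total: "(\<integral>\<^sup>+Y. matnormal_density Mu' S Y \<partial>lborel) = 1" for Mu' :: "real^'q^'d"
    using distributed_nn_integral[OF D, of "\<lambda>_. 1"]
      nn_integral_matnormal_density_translate[of Mu S Mu']
    by (simp add: emeasure_space_1)
  define C where "C = Mu \<bullet> T + (\<Sum>i\<in>UNIV. T$i \<bullet> (S *v T$i)) / 2"
  have [measurable]: "(\<lambda>Y::real^'q^'d. exp (Y \<bullet> T)) \<in> borel_measurable borel"
    by (intro borel_measurable_continuous_onI continuous_intros)
  have "(\<integral>\<^sup>+w. ennreal (exp (J w \<bullet> T)) \<partial>M)
      = (\<integral>\<^sup>+Y. matnormal_density Mu S Y * ennreal (exp (Y \<bullet> T)) \<partial>lborel)"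
    by (rule distributed_nn_integral[OF D, symmetric]) simp
  also have "\<dots> = (\<integral>\<^sup>+Y. ennreal (exp C) * matnormal_density (Mu + (\<chi> i. S *v T$i)) S Y \<partial>lborel)"
    unfolding C_def by (simp add: matnormal_density_mult_exp[OF S])
  also have "\<dots> = ennreal (exp C)"
    by (subst nn_integral_cmult)
      (auto simp: total matnormal_density_translate[of _ S _ Mu])
  finally have nn: "(\<integral>\<^sup>+w. ennreal (exp (J w \<bullet> T)) \<partial>M) = ennreal (exp C)" .
  show "integrable M (\<lambda>w. exp (J w \<bullet> T))"
    by (rule integrableI_nn_integral_finite[OF _ _ nn]) auto
  have "(\<integral>w. exp (J w \<bullet> T) \<partial>M) = enn2real (\<integral>\<^sup>+w. ennreal (exp (J w \<bullet> T)) \<partial>M)"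
    by (rule integral_eq_nn_integral) auto
  then show "(\<integral>w. exp (J w \<bullet> T) \<partial>M) = exp (Mu \<bullet> T + (\<Sum>i\<in>UNIV. T$i \<bullet> (S *v T$i)) / 2)"
    using nn unfolding C_def by simp
qed

lemma
  fixes J :: "'w \<Rightarrow> real^'q^'d" and T :: "real^'q^'d"
  assumes P: "prob_space M" and S: "spd S" and D: "distributed M lborel J (matnormal_density Mu S)"
  defines "a \<equiv> Mu \<bullet> T" and "b \<equiv> (\<Sum>i\<in>UNIV. T$i \<bullet> (S *v T$i))"
  shows integrable_matnormal_inner_power2: "integrable M (\<lambda>w. (J w \<bullet> T) ^ 2)"
    and integrable_matnormal_inner_power4: "integrable M (\<lambda>w. (J w \<bullet> T) ^ 4)"
    and matnormal_inner_second_moment: "(\<integral>w. (J w \<bullet> T) ^ 2 \<partial>M) = b + a^2"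
    and matnormal_inner_fourth_moment:
      "(\<integral>w. (J w \<bullet> T) ^ 4 \<partial>M) = a^4 + 6 * a^2 * b + 3 * b^2"
proof -
  have [measurable]: "J \<in> borel_measurable M"
    using distributed_measurable[OF D] by simp
  have scale: "J w \<bullet> (t *\<^sub>R T) = t * (J w \<bullet> T)" for w t by simp
  have b_scale: "(\<Sum>i\<in>UNIV. (t *\<^sub>R T)$i \<bullet> (S *v (t *\<^sub>R T)$i)) = t^2 * b" for t
    unfolding b_def
    by (simp add: matrix_vector_mult_scaleR sum_distrib_left power2_eq_square algebra_simps)
  have "integrable M (\<lambda>w. exp (t * (J w \<bullet> T)))"
    and "(\<integral>w. exp (t * (J w \<bullet> T)) \<partial>M) = exp (t * a + t^2 * b / 2)" for t
    using integrable_exp_inner_matnormal[OF P S D, of "t *\<^sub>R T"]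
      expectation_exp_inner_matnormal[OF P S D, of "t *\<^sub>R T"]
    unfolding scale b_scale a_def by simp_all
  from moments_of_gaussian_mgf[OF P _ this]
  show "integrable M (\<lambda>w. (J w \<bullet> T) ^ 2)" "integrable M (\<lambda>w. (J w \<bullet> T) ^ 4)"
    "(\<integral>w. (J w \<bullet> T) ^ 2 \<partial>M) = b + a^2"
    "(\<integral>w. (J w \<bullet> T) ^ 4 \<partial>M) = a^4 + 6 * a^2 * b + 3 * b^2"
    by simp_all
qed

section \<open>Moments of the Gram quadratic form\<close>

definition row_matrix :: "'d \<Rightarrow> real^'q \<Rightarrow> real^'q^'d" where
  "row_matrix i u = (\<chi> k. if k = i then u else 0)"

lemma inner_row_matrix: "A \<bullet> row_matrix i u = A $ i \<bullet> u"
  unfolding row_matrix_def inner_vec_def[of A] by (simp add: if_distrib cong: if_cong)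

lemma row_matrix_quadratic:
  "(\<Sum>k\<in>UNIV. row_matrix i u $ k \<bullet> (S *v row_matrix i u $ k)) = u \<bullet> (S *v u)"
  unfolding row_matrix_def by (simp add: if_distrib cong: if_cong)

lemma two_row_matrices_quadratic:
  assumes "i \<noteq> j"
  shows "(\<Sum>k\<in>UNIV. (row_matrix i u + row_matrix j w) $ k \<bullet> (S *v (row_matrix i u + row_matrix j w) $ k))
    = u \<bullet> (S *v u) + w \<bullet> (S *v w)"
proof -
  have "(row_matrix i u + row_matrix j w) $ k \<bullet> (S *v (row_matrix i u + row_matrix j w) $ k)
      = (if k = i then u \<bullet> (S *v u) else 0) + (if k = j then w \<bullet> (S *v w) else 0)" for k
    using assms by (auto simp: row_matrix_def)
  then show ?thesis by (simp add: sum.distrib)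
qed

lemma
  fixes J :: "'w \<Rightarrow> real^'q^'d" and v :: "real^'q" and i :: 'd
  assumes P: "prob_space M" and S: "spd S" and D: "distributed M lborel J (matnormal_density Mu S)"
  defines "s \<equiv> v \<bullet> (S *v v)" and "m \<equiv> Mu $ i \<bullet> v"
  shows integrable_matnormal_row_power2: "integrable M (\<lambda>w. (J w $ i \<bullet> v) ^ 2)"
    and integrable_matnormal_row_power4: "integrable M (\<lambda>w. (J w $ i \<bullet> v) ^ 4)"
    and matnormal_row_second_moment: "(\<integral>w. (J w $ i \<bullet> v) ^ 2 \<partial>M) = s + m^2"
    and matnormal_row_fourth_moment:
      "(\<integral>w. (J w $ i \<bullet> v) ^ 4 \<partial>M) = m^4 + 6 * m^2 * s + 3 * s^2"
  using integrable_matnormal_inner_power2[OF P S D, of "row_matrix i v"]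
    integrable_matnormal_inner_power4[OF P S D, of "row_matrix i v"]
    matnormal_inner_second_moment[OF P S D, of "row_matrix i v"]
    matnormal_inner_fourth_moment[OF P S D, of "row_matrix i v"]
  unfolding s_def m_def by (simp_all add: inner_row_matrix row_matrix_quadratic)

text \<open>Distinct rows are independent; here this is seen through the polarization identity
  \<open>12 a\<^sup>2 b\<^sup>2 = (a + b)^4 + (a - b)^4 - 2 a^4 - 2 b^4\<close>, whose terms are all fourth moments of
  Gaussian projections of \<open>J\<close>.\<close>
lemma
  fixes J :: "'w \<Rightarrow> real^'q^'d" and v :: "real^'q"
  assumes P: "prob_space M" and S: "spd S" and D: "distributed M lborel J (matnormal_density Mu S)"
    and ij: "i \<noteq> j"
  defines "s \<equiv> v \<bullet> (S *v v)"
  shows integrable_matnormal_rows_product: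
      "integrable M (\<lambda>w. (J w $ i \<bullet> v) ^ 2 * (J w $ j \<bullet> v) ^ 2)"
    and matnormal_rows_product_moment:
      "(\<integral>w. (J w $ i \<bullet> v) ^ 2 * (J w $ j \<bullet> v) ^ 2 \<partial>M)
        = (s + (Mu $ i \<bullet> v)^2) * (s + (Mu $ j \<bullet> v)^2)"
proof -
  define a where "a = Mu $ i \<bullet> v"
  define b where "b = Mu $ j \<bullet> v"
  have S_uminus: "S *v (- v) = - (S *v v)"
    by (simp add: vec_eq_iff matrix_vector_mult_def sum_negf)
  note plus = integrable_matnormal_inner_power4[OF P S D, of "row_matrix i v + row_matrix j v"]
    matnormal_inner_fourth_moment[OF P S D, of "row_matrix i v + row_matrix j v"]
  note minus = integrable_matnormal_inner_power4[OF P S D, of "row_matrix i v + row_matrix j (- v)"]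
    matnormal_inner_fourth_moment[OF P S D, of "row_matrix i v + row_matrix j (- v)"]
  have int_plus: "integrable M (\<lambda>w. (J w $ i \<bullet> v + J w $ j \<bullet> v) ^ 4)"
    and E_plus: "(\<integral>w. (J w $ i \<bullet> v + J w $ j \<bullet> v) ^ 4 \<partial>M)
      = (a + b)^4 + 6 * (a + b)^2 * (2 * s) + 3 * (2 * s)^2"
    using plus two_row_matrices_quadratic[OF ij, of v v S]
    unfolding a_def b_def s_def by (simp_all add: inner_add_right inner_row_matrix)
  have int_minus: "integrable M (\<lambda>w. (J w $ i \<bullet> v - J w $ j \<bullet> v) ^ 4)"
    and E_minus: "(\<integral>w. (J w $ i \<bullet> v - J w $ j \<bullet> v) ^ 4 \<partial>M)
      = (a - b)^4 + 6 * (a - b)^2 * (2 * s) + 3 * (2 * s)^2"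
    using minus two_row_matrices_quadratic[OF ij, of v "- v" S]
    unfolding a_def b_def s_def by (simp_all add: inner_add_right inner_row_matrix S_uminus)
  have polarization: "x^2 * y^2 = ((x + y)^4 + (x - y)^4 - 2 * x^4 - 2 * y^4) / 12" for x y :: real
    by (simp add: algebra_simps power2_eq_square power4_eq_xxxx)
  note row4 = integrable_matnormal_row_power4[OF P S D]
  show "integrable M (\<lambda>w. (J w $ i \<bullet> v) ^ 2 * (J w $ j \<bullet> v) ^ 2)"
    unfolding polarization using int_plus int_minus row4 by simp
  have "(\<integral>w. (J w $ i \<bullet> v) ^ 2 * (J w $ j \<bullet> v) ^ 2 \<partial>M)
      = ((\<integral>w. (J w $ i \<bullet> v + J w $ j \<bullet> v) ^ 4 \<partial>M) + (\<integral>w. (J w $ i \<bullet> v - J w $ j \<bullet> v) ^ 4 \<partial>M)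
        - 2 * (\<integral>w. (J w $ i \<bullet> v) ^ 4 \<partial>M) - 2 * (\<integral>w. (J w $ j \<bullet> v) ^ 4 \<partial>M)) / 12"
    unfolding polarization using int_plus int_minus row4 by simp
  also have "\<dots> = (s + a^2) * (s + b^2)"
    unfolding E_plus E_minus matnormal_row_fourth_moment[OF P S D] a_def b_def s_def
    by (simp add: algebra_simps power2_eq_square power4_eq_xxxx)
  finally show "(\<integral>w. (J w $ i \<bullet> v) ^ 2 * (J w $ j \<bullet> v) ^ 2 \<partial>M)
      = (s + (Mu $ i \<bullet> v)^2) * (s + (Mu $ j \<bullet> v)^2)"
    unfolding a_def b_def .
qed

lemma gram_quadratic_form: "v \<bullet> (Gmat (A :: real^'q^'d) *v v) = (\<Sum>i\<in>UNIV. (A $ i \<bullet> v)^2)"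
proof -
  have "v \<bullet> (Gmat A *v v) = (A *v v) \<bullet> (A *v v)"
    unfolding Gmat_def by (simp add: matrix_vector_mul_assoc inner_matrix_vector_mult_left)
  also have "\<dots> = (\<Sum>i\<in>UNIV. (A $ i \<bullet> v)^2)"
    by (simp add: inner_vec_def matrix_vector_mult_def inner_vec_def[of "A $ _"] power2_eq_square
        mult.commute)
  finally show ?thesis .
qed

lemma
  fixes J :: "'w \<Rightarrow> real^'q^'d" and v :: "real^'q"
  assumes P: "prob_space M" and S: "spd S" and D: "distributed M lborel J (matnormal_density Mu S)"
  defines "s \<equiv> v \<bullet> (S *v v)" and "L \<equiv> (\<Sum>i\<in>UNIV. (Mu $ i \<bullet> v)^2)"
    and "n \<equiv> real CARD('d)"
  shows integrable_matnormal_gram_quadratic: "integrable M (\<lambda>w. v \<bullet> (Gmat (J w) *v v))"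
    and integrable_matnormal_gram_quadratic_power2:
      "integrable M (\<lambda>w. (v \<bullet> (Gmat (J w) *v v))^2)"
    and matnormal_gram_quadratic_mean: "(\<integral>w. v \<bullet> (Gmat (J w) *v v) \<partial>M) = n * s + L"
    and matnormal_gram_quadratic_second_moment:
      "(\<integral>w. (v \<bullet> (Gmat (J w) *v v))^2 \<partial>M) = (n * s + L)^2 + 4 * s * L + 2 * n * s^2"
proof -
  define Z where "Z i w = (J w $ i \<bullet> v)^2" for i w
  have quad: "v \<bullet> (Gmat (J w) *v v) = (\<Sum>i\<in>UNIV. Z i w)" for w
    unfolding Z_def gram_quadratic_form ..
  have square: "(\<Sum>i\<in>UNIV. Z i w)^2 = (\<Sum>i\<in>UNIV. \<Sum>j\<in>UNIV. Z i w * Z j w)" for w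
    by (simp add: power2_eq_square sum_product)
  have Z_int: "integrable M (Z i)" and E_Z: "(\<integral>w. Z i w \<partial>M) = s + (Mu $ i \<bullet> v)^2" for i
    unfolding Z_def s_def
    using integrable_matnormal_row_power2[OF P S D] matnormal_row_second_moment[OF P S D] by simp_all
  have ZZ: "integrable M (\<lambda>w. Z i w * Z j w)
      \<and> (\<integral>w. Z i w * Z j w \<partial>M) = (s + (Mu $ i \<bullet> v)^2) * (s + (Mu $ j \<bullet> v)^2)
        + (if i = j then 4 * (Mu $ i \<bullet> v)^2 * s + 2 * s^2 else 0)" for i j
  proof (cases "i = j")
    case True
    have "Z i w * Z i w = (J w $ i \<bullet> v)^4" for w
      unfolding Z_def by (simp add: power2_eq_square power4_eq_xxxx)
    then show ?thesis
      using True integrable_matnormal_row_power4[OF P S D] matnormal_row_fourth_moment[OF P S D]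
      unfolding s_def by (simp add: algebra_simps power2_eq_square power4_eq_xxxx)
  next
    case False
    then show ?thesis
      using integrable_matnormal_rows_product[OF P S D False]
        matnormal_rows_product_moment[OF P S D False]
      unfolding Z_def s_def by simp
  qed
  note ZZ_int = ZZ[THEN conjunct1] and E_ZZ = ZZ[THEN conjunct2]
  show "integrable M (\<lambda>w. v \<bullet> (Gmat (J w) *v v))"
    unfolding quad using Z_int by simp
  show "integrable M (\<lambda>w. (v \<bullet> (Gmat (J w) *v v))^2)"
    unfolding quad square using ZZ_int by simp
  have sum_s: "(\<Sum>i\<in>UNIV. s + (Mu $ i \<bullet> v)^2) = n * s + L"
    unfolding n_def L_def by (simp add: sum.distrib)
  show "(\<integral>w. v \<bullet> (Gmat (J w) *v v) \<partial>M) = n * s + L"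
    unfolding quad using Z_int by (simp add: E_Z sum_s)
  have "(\<integral>w. (v \<bullet> (Gmat (J w) *v v))^2 \<partial>M)
      = (\<Sum>i\<in>UNIV. \<Sum>j\<in>UNIV. (s + (Mu $ i \<bullet> v)^2) * (s + (Mu $ j \<bullet> v)^2))
        + (\<Sum>i\<in>UNIV. 4 * (Mu $ i \<bullet> v)^2 * s + 2 * s^2)"
    unfolding quad square using ZZ_int by (simp add: E_ZZ sum.distrib)
  also have "\<dots> = (n * s + L)^2 + 4 * s * L + 2 * n * s^2"
    unfolding sum_product[symmetric] sum_s power2_eq_square[of "n * s + L"]
    unfolding n_def L_def by (simp add: sum.distrib sum_distrib_left sum_distrib_right algebra_simps)
  finally show "(\<integral>w. (v \<bullet> (Gmat (J w) *v v))^2 \<partial>M) = (n * s + L)^2 + 4 * s * L + 2 * n * s^2" .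
qed

lemma integrable_euclidean:
  fixes f :: "'w \<Rightarrow> 'a::euclidean_space"
  assumes "\<And>b. b \<in> Basis \<Longrightarrow> integrable M (\<lambda>w. f w \<bullet> b)"
  shows "integrable M f"
proof -
  have "integrable M (\<lambda>w. \<Sum>b\<in>Basis. (f w \<bullet> b) *\<^sub>R b)"
    using assms by (intro Bochner_Integration.integrable_sum integrable_scaleR_left) auto
  then show ?thesis by (simp add: euclidean_representation)
qed

lemma integrable_mult_of_square_integrable:
  fixes f g :: "'w \<Rightarrow> real"
  assumes "integrable M (\<lambda>w. f w ^ 2)" "integrable M (\<lambda>w. g w ^ 2)"
    and [measurable]: "f \<in> borel_measurable M" "g \<in> borel_measurable M"
  shows "integrable M (\<lambda>w. f w * g w)"
proof (rule Bochner_Integration.integrable_bound)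
  show "integrable M (\<lambda>w. f w ^ 2 + g w ^ 2)" using assms by simp
  have "\<bar>f w * g w\<bar> \<le> f w ^ 2 + g w ^ 2" for w
  proof -
    have "2 * (\<bar>f w\<bar> * \<bar>g w\<bar>) \<le> \<bar>f w\<bar>^2 + \<bar>g w\<bar>^2"
      using sum_squares_bound[of "\<bar>f w\<bar>" "\<bar>g w\<bar>"] by (simp add: mult.assoc)
    moreover have "0 \<le> \<bar>f w\<bar> * \<bar>g w\<bar>" by simp
    ultimately show ?thesis unfolding abs_mult power2_abs by linarith
  qed
  then show "AE w in M. norm (f w * g w) \<le> norm (f w ^ 2 + g w ^ 2)" by auto
qed measurable

lemma integrable_matnormal_gram:
  fixes J :: "'w \<Rightarrow> real^'q^'d"
  assumes P: "prob_space M" and S: "spd S" and D: "distributed M lborel J (matnormal_density Mu S)"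
  shows "integrable M (\<lambda>w. Gmat (J w))"
proof (rule integrable_euclidean)
  have [measurable]: "J \<in> borel_measurable M"
    using distributed_measurable[OF D] by simp
  fix b :: "real^'q^'q" assume "b \<in> Basis"
  then obtain k l where b: "b = axis k (axis l 1)" by (auto simp: Basis_vec_def)
  have entry: "Gmat A \<bullet> b = (\<Sum>i\<in>UNIV. (A \<bullet> axis i (axis k 1)) * (A \<bullet> axis i (axis l 1)))"
    for A :: "real^'q^'d"
    unfolding b
    by (simp add: inner_axis Gmat_def matrix_matrix_mult_def transpose_def cart_eq_inner_axis[symmetric])
  show "integrable M (\<lambda>w. Gmat (J w) \<bullet> b)"
    unfolding entry
    by (intro Bochner_Integration.integrable_sum integrable_mult_of_square_integrable
        integrable_matnormal_inner_power2[OF P S D]) measurable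
qed

lemma riem_norm_eq_sqrt_expectation:
  fixes J :: "'w \<Rightarrow> real^'q^'d" and v :: "real^'q"
  assumes "integrable M (\<lambda>w. Gmat (J w))"
  shows "riem_norm M J v = sqrt (\<integral>w. v \<bullet> (Gmat (J w) *v v) \<partial>M)"
proof -
  have "bounded_linear (\<lambda>A :: real^'q^'q. v \<bullet> (A *v v))"
    unfolding linear_conv_bounded_linear[symmetric]
    by (rule linearI)
      (simp_all add: matrix_vector_mult_add_rdistrib inner_add_right
        scaleR_matrix_vector_assoc[symmetric])
  from integral_bounded_linear[OF this assms] show ?thesis
    unfolding riem_norm_def by simp
qed

section \<open>The expected square root\<close>

lemma sqrt_le_tangent: "0 \<le> w \<Longrightarrow> 0 < R \<Longrightarrow> sqrt w \<le> (w / R + R) / 2"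
proof -
  assume w: "0 \<le> w" and R: "0 < R"
  have "2 * R * sqrt w \<le> w + R * R"
    using w sum_squares_bound[of R "sqrt w"] by (simp add: power2_eq_square mult.assoc)
  then show ?thesis using R by (simp add: field_simps)
qed

text \<open>The cubic \<open>(3 R\<^sup>2 y\<^sup>2 - y^4) / (2 R\<^sup>3)\<close> touches \<open>y\<close> to second order at \<open>y = R\<close>:
  their difference is \<open>y (y - R)\<^sup>2 (y + 2R) / (2 R\<^sup>3) \<ge> 0\<close>.\<close>
lemma sqrt_ge_quadratic_minorant:
  "0 \<le> w \<Longrightarrow> 0 < R \<Longrightarrow> (3 * R^2 * w - w^2) / (2 * R^3) \<le> sqrt w"
proof -
  assume w: "0 \<le> w" and R: "0 < R"
  define y where "y = sqrt w"
  have "0 \<le> y * (y - R)^2 * (y + 2 * R)" unfolding y_def using w R by simp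
  moreover have "w = y^2" unfolding y_def using w by simp
  ultimately have "3 * R^2 * w - w^2 \<le> y * (2 * R^3)"
    by (simp add: algebra_simps power2_eq_square power3_eq_cube power4_eq_xxxx)
  then show ?thesis using R unfolding y_def by (simp add: divide_le_eq mult.commute)
qed

lemma sqrt_expectation_relative_gap:
  fixes W :: "'w \<Rightarrow> real"
  assumes "prob_space M" and W_nonneg: "\<And>w. 0 \<le> W w"
    and W_int: "integrable M W" and W2_int: "integrable M (\<lambda>w. W w ^ 2)"
    and mean: "(\<integral>w. W w \<partial>M) = Q" and Q: "0 < Q"
    and second_moment: "(\<integral>w. W w ^ 2 \<partial>M) = Q^2 + V"
  shows "0 \<le> (sqrt Q - (\<integral>w. sqrt (W w) \<partial>M)) / sqrt Q"
    and "(sqrt Q - (\<integral>w. sqrt (W w) \<partial>M)) / sqrt Q \<le> V / (2 * Q^2)"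
proof -
  interpret prob_space M by fact
  define R where "R = sqrt Q"
  have R: "0 < R" "R^2 = Q" unfolding R_def using Q by simp_all
  have sqrt_int: "integrable M (\<lambda>w. sqrt (W w))"
  proof (rule Bochner_Integration.integrable_bound)
    show "integrable M (\<lambda>w. (W w / 1 + 1) / 2)" using W_int by simp
    show "AE w in M. norm (sqrt (W w)) \<le> norm ((W w / 1 + 1) / 2)"
      using sqrt_le_tangent[OF W_nonneg zero_less_one] W_nonneg by auto
    show "(\<lambda>w. sqrt (W w)) \<in> borel_measurable M"
      using borel_measurable_integrable[OF W_int] by measurable
  qed
  have "(\<integral>w. sqrt (W w) \<partial>M) \<le> (\<integral>w. (W w / R + R) / 2 \<partial>M)"
    using sqrt_int W_int sqrt_le_tangent[OF W_nonneg R(1)] by (intro integral_mono) auto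
  also have "\<dots> = R"
    using W_int mean R by (simp add: prob_space field_simps power2_eq_square)
  finally show "0 \<le> (sqrt Q - (\<integral>w. sqrt (W w) \<partial>M)) / sqrt Q"
    using R unfolding R_def by simp
  have "(3 * R^2 * Q - (Q^2 + V)) / (2 * R^3) = (\<integral>w. (3 * R^2 * W w - W w ^ 2) / (2 * R^3) \<partial>M)"
    using W_int W2_int mean second_moment by simp
  also have "\<dots> \<le> (\<integral>w. sqrt (W w) \<partial>M)"
    using sqrt_int W_int W2_int sqrt_ge_quadratic_minorant[OF W_nonneg R(1)]
    by (intro integral_mono) auto
  finally have "R - (\<integral>w. sqrt (W w) \<partial>M) \<le> R - (3 * R^2 * Q - (Q^2 + V)) / (2 * R^3)"
    by simp
  also have "\<dots> = V / (2 * Q^2) * R"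
    using R by (simp add: field_simps power2_eq_square power3_eq_cube flip: R(2))
  finally show "(sqrt Q - (\<integral>w. sqrt (W w) \<partial>M)) / sqrt Q \<le> V / (2 * Q^2)"
    using R unfolding R_def by (simp add: divide_le_eq)
qed

lemma matnormal_finsler_riem_relative_gap:
  fixes J :: "'w \<Rightarrow> real^'q^'d" and v :: "real^'q"
  assumes P: "prob_space M" and S: "spd S" and D: "distributed M lborel J (matnormal_density Mu S)"
    and "v \<noteq> 0"
  shows "0 \<le> (riem_norm M J v - finsler_norm M J v) / riem_norm M J v"
    and "(riem_norm M J v - finsler_norm M J v) / riem_norm M J v \<le> 1 / real CARD('d)"
proof -
  define s where "s = v \<bullet> (S *v v)"
  define L where "L = (\<Sum>i\<in>UNIV. (Mu $ i \<bullet> v)^2)"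
  define n where "n = real CARD('d)"
  have "0 < s" "0 \<le> L" "0 < n"
    using S \<open>v \<noteq> 0\<close> unfolding s_def L_def n_def spd_def by (simp_all add: sum_nonneg)
  then have "0 < n * s + L" by (simp add: add_pos_nonneg)
  define W where "W w = v \<bullet> (Gmat (J w) *v v)" for w
  have W_nonneg: "0 \<le> W w" for w
    unfolding W_def gram_quadratic_form by (simp add: sum_nonneg)
  note moments = integrable_matnormal_gram_quadratic[OF P S D, where v = v]
    integrable_matnormal_gram_quadratic_power2[OF P S D, where v = v]
    matnormal_gram_quadratic_mean[OF P S D, where v = v]
    matnormal_gram_quadratic_second_moment[OF P S D, where v = v]
  have "riem_norm M J v = sqrt (n * s + L)"
    using riem_norm_eq_sqrt_expectation[OF integrable_matnormal_gram[OF P S D]] moments(3)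
    unfolding s_def L_def n_def by simp
  moreover have "finsler_norm M J v = (\<integral>w. sqrt (W w) \<partial>M)"
    unfolding finsler_norm_def W_def ..
  moreover note sqrt_expectation_relative_gap[OF P W_nonneg,
      where Q = "n * s + L" and V = "4 * s * L + 2 * n * s^2"]
  ultimately have gap: "0 \<le> (riem_norm M J v - finsler_norm M J v) / riem_norm M J v"
    "(riem_norm M J v - finsler_norm M J v) / riem_norm M J v
      \<le> (4 * s * L + 2 * n * s^2) / (2 * (n * s + L)^2)"
    using moments \<open>0 < n * s + L\<close> unfolding W_def s_def L_def n_def by simp_all
  then show "0 \<le> (riem_norm M J v - finsler_norm M J v) / riem_norm M J v" by simp
  have "2 * (n * s + L)^2 = n * (4 * s * L + 2 * n * s^2) + 2 * L^2"
    by (simp add: power2_eq_square algebra_simps)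
  then have "n * (4 * s * L + 2 * n * s^2) \<le> 2 * (n * s + L)^2"
    by simp
  then have "(4 * s * L + 2 * n * s^2) / (2 * (n * s + L)^2) \<le> 1 / n"
    using \<open>0 < n\<close> \<open>0 < n * s + L\<close> by (simp add: divide_simps mult.commute)
  with gap show "(riem_norm M J v - finsler_norm M J v) / riem_norm M J v \<le> 1 / real CARD('d)"
    unfolding n_def by simp
qed

theorem mainTheorem14:
  fixes M :: "'w measure"
    and f :: "real^'q \<Rightarrow> 'w \<Rightarrow> real^'d"
    and J :: "real^'q \<Rightarrow> 'w \<Rightarrow> real^'q^'d"
    and Sigma :: "real^'q \<Rightarrow> real^'q^'q"
    and Mb :: real
  assumes "prob_space M"
    and jac: "\<And>x w. w \<in> space M \<Longrightarrow> ((\<lambda>y. f y w) has_derivative (\<lambda>h. J x w *v h)) (at x)"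
    and spd: "\<And>x. spd (Sigma x)"
    and gauss: "\<And>x. distributed M lborel (J x)
                   (matnormal_density (integral\<^sup>L M (J x)) (Sigma x))"
    and Mb_nonneg: "Mb \<ge> 0"
    and omega_bd: "\<And>x v. v \<noteq> 0 \<Longrightarrow> omega M (J x) (Sigma x) v \<le> Mb * real CARD('d)"
  shows "\<forall>x v. v \<noteq> 0 \<longrightarrow>
           0 \<le> (riem_norm M (J x) v - finsler_norm M (J x) v) / riem_norm M (J x) v \<and>
           (riem_norm M (J x) v - finsler_norm M (J x) v) / riem_norm M (J x) v
             \<le> (1 + Mb) / real CARD('d)"
proof (intro allI impI conjI)
  fix x v :: "real^'q" assume "v \<noteq> 0"
  note gap = matnormal_finsler_riem_relative_gap[OF \<open>prob_space M\<close> spd gauss \<open>v \<noteq> 0\<close>]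
  show "0 \<le> (riem_norm M (J x) v - finsler_norm M (J x) v) / riem_norm M (J x) v"
    by (rule gap(1))
  have "1 / real CARD('d) \<le> (1 + Mb) / real CARD('d)"
    using Mb_nonneg by (simp add: divide_right_mono)
  with gap(2) show "(riem_norm M (J x) v - finsler_norm M (J x) v) / riem_norm M (J x) v
      \<le> (1 + Mb) / real CARD('d)"
    by (rule order_trans)
qed

end
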